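(* Every rigid reduced QP $(A,S)$ is $2$-acyclic, i.e. for every pair of vertices $i\ne j$, $A_{i,j}=0$ or $A_{j,i}=0$.
   Context: Fix a field $K$; quiver $Q$ with vertices $Q_0$; $R=K^{Q_0}$; arrow span $A$, $A_{i,j}=e_iAe_j$ spanned by arrows $j\to i$. Complete path algebra $R\langle\langle A\rangle\rangle=\prod_{d\ge0}A^d$, $\mathfrak m=\prod_{d\ge1}A^d$, $\mathfrak m$-adic topology. Potentials: linear combinations of cyclic paths; cyclic equivalence: difference in the closure of the span of $a_1\cdots a_d-a_2\cdots a_da_1$. $\partial_\xi(a_1\cdots a_d)=\sum_k\xi(a_k)a_{k+1}\cdots a_da_1\cdots a_{k-1}$ for $\xi\in A^\star$; $J(S)$ closure of the ideal generated by all $\partial_\xi S$; $\mathcal P(A,S)=R\langle\langle A\rangle\rangle/J(S)$. QP: no loops, no two cyclically equivalent cyclic paths in $S$; reduced if $S\in\mathfrak m^3$. For a topological algebra $U$, $\mathrm{Tr}(U)=U/\{U,U\}$ with $\{U,U\}$ the closure of the span of commutators. $(A,S)$ is rigid if $\mathrm{Tr}(\mathcal P(A,S))$ equals the image of $R$ (equivalently, every potential on $A$ is cyclically equivalent to an element of $J(S)$). *)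

theory Defs
  imports Main
begin

text \<open>
A quiver is given by a finite vertex type 'v, a finite set Q1 of arrows, and
source / target maps src, tgt.  An arrow a with src a = j, tgt a = i spans A_{i,j}.
A path a_1 ... a_d (product in the algebra, composable iff src a_k = tgt a_{k+1})
is represented as a pair (v, [a_1,...,a_d]) where v is its starting vertex
(v = src a_d); the trivial path e_v is (v, []).  Elements of the complete path
algebra R<<A>> are functions from such pairs to the field, vanishing off valid paths
(arbitrary, possibly infinite, formal linear combinations of paths).
\<close>

type_synonym ('v, 'a) qpath = "'v \<times> 'a list"

definition composable :: "('a \<Rightarrow> 'v) \<Rightarrow> ('a \<Rightarrow> 'v) \<Rightarrow> 'a list \<Rightarrow> bool" where
  "composable src tgt as \<longleftrightarrow> (\<forall>k. Suc k < length as \<longrightarrow> src (as ! k) = tgt (as ! Suc k))"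

definition is_path :: "'a set \<Rightarrow> ('a \<Rightarrow> 'v) \<Rightarrow> ('a \<Rightarrow> 'v) \<Rightarrow> ('v, 'a) qpath \<Rightarrow> bool" where
  "is_path Q1 src tgt p \<longleftrightarrow> set (snd p) \<subseteq> Q1 \<and> composable src tgt (snd p)
      \<and> (snd p \<noteq> [] \<longrightarrow> src (last (snd p)) = fst p)"

definition path_tgt :: "('a \<Rightarrow> 'v) \<Rightarrow> ('v, 'a) qpath \<Rightarrow> 'v" where
  "path_tgt tgt p = (if snd p = [] then fst p else tgt (hd (snd p)))"

definition is_cyclic_path :: "'a set \<Rightarrow> ('a \<Rightarrow> 'v) \<Rightarrow> ('a \<Rightarrow> 'v) \<Rightarrow> ('v, 'a) qpath \<Rightarrow> bool" where
  "is_cyclic_path Q1 src tgt p \<longleftrightarrow> is_path Q1 src tgt p \<and> snd p \<noteq> [] \<and> path_tgt tgt p = fst p"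

definition elt :: "'a set \<Rightarrow> ('a \<Rightarrow> 'v) \<Rightarrow> ('a \<Rightarrow> 'v) \<Rightarrow> (('v, 'a) qpath \<Rightarrow> 'k::field) \<Rightarrow> bool" where
  "elt Q1 src tgt f \<longleftrightarrow> (\<forall>p. \<not> is_path Q1 src tgt p \<longrightarrow> f p = 0)"

text \<open>Multiplication: (u,p1)(v,p2) = (v, p1 @ p2) if u = target of (v,p2), else 0.\<close>
definition pmult :: "('a \<Rightarrow> 'v) \<Rightarrow> (('v, 'a) qpath \<Rightarrow> 'k::field) \<Rightarrow> (('v, 'a) qpath \<Rightarrow> 'k) \<Rightarrow> ('v, 'a) qpath \<Rightarrow> 'k" where
  "pmult tgt f g p = (\<Sum>k\<in>{0..length (snd p)}.
      f (path_tgt tgt (fst p, drop k (snd p)), take k (snd p)) * g (fst p, drop k (snd p)))"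

definition pathvec :: "('v, 'a) qpath \<Rightarrow> ('v, 'a) qpath \<Rightarrow> 'k::field" where
  "pathvec p = (\<lambda>q. if q = p then 1 else 0)"

fun rot :: "('a \<Rightarrow> 'v) \<Rightarrow> ('v, 'a) qpath \<Rightarrow> ('v, 'a) qpath" where
  "rot src (v, []) = (v, [])"
| "rot src (v, a # as) = (src a, as @ [a])"

inductive_set kspan :: "((('v, 'a) qpath \<Rightarrow> 'k::field) set) \<Rightarrow> (('v, 'a) qpath \<Rightarrow> 'k) set"
  for X where
  zero: "(\<lambda>p. 0) \<in> kspan X"
| smult: "x \<in> X \<Longrightarrow> (\<lambda>p. c * x p) \<in> kspan X"
| add: "x \<in> kspan X \<Longrightarrow> y \<in> kspan X \<Longrightarrow> (\<lambda>p. x p + y p) \<in> kspan X"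

text \<open>Closure in the m-adic topology: f lies in the closure of U iff for every n
  some u in U agrees with f modulo m^n, i.e. on all paths of length < n.\<close>
definition mclosure :: "(('v, 'a) qpath \<Rightarrow> 'k) set \<Rightarrow> (('v, 'a) qpath \<Rightarrow> 'k) set" where
  "mclosure U = {f. \<forall>n. \<exists>u\<in>U. \<forall>p. length (snd p) < n \<longrightarrow> f p = u p}"

inductive_set ideal_gen :: "'a set \<Rightarrow> ('a \<Rightarrow> 'v) \<Rightarrow> ('a \<Rightarrow> 'v) \<Rightarrow>
    ((('v, 'a) qpath \<Rightarrow> 'k::field) set) \<Rightarrow> (('v, 'a) qpath \<Rightarrow> 'k) set"
  for Q1 src tgt G where
  zero: "(\<lambda>p. 0) \<in> ideal_gen Q1 src tgt G"
| gen: "g \<in> G \<Longrightarrow> elt Q1 src tgt u \<Longrightarrow> elt Q1 src tgt w \<Longrightarrow>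
        pmult tgt (pmult tgt u g) w \<in> ideal_gen Q1 src tgt G"
| add: "x \<in> ideal_gen Q1 src tgt G \<Longrightarrow> y \<in> ideal_gen Q1 src tgt G \<Longrightarrow>
        (\<lambda>p. x p + y p) \<in> ideal_gen Q1 src tgt G"

definition potential :: "'a set \<Rightarrow> ('a \<Rightarrow> 'v) \<Rightarrow> ('a \<Rightarrow> 'v) \<Rightarrow> (('v, 'a) qpath \<Rightarrow> 'k::field) \<Rightarrow> bool" where
  "potential Q1 src tgt S \<longleftrightarrow> (\<forall>p. S p \<noteq> 0 \<longrightarrow> is_cyclic_path Q1 src tgt p)"

definition cyc_equiv :: "'a set \<Rightarrow> ('a \<Rightarrow> 'v) \<Rightarrow> ('a \<Rightarrow> 'v) \<Rightarrow> (('v, 'a) qpath \<Rightarrow> 'k::field) \<Rightarrow> (('v, 'a) qpath \<Rightarrow> 'k) \<Rightarrow> bool" where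
  "cyc_equiv Q1 src tgt S S' \<longleftrightarrow>
     (\<lambda>p. S p - S' p) \<in> mclosure (kspan {(\<lambda>q. pathvec c q - pathvec (rot src c) q) | c. is_cyclic_path Q1 src tgt c})"

text \<open>Cyclic derivative \<partial>_\<xi> S for \<xi> \<in> A^*, given by the values \<xi> a on the arrow basis.
  The coefficient of a path q collects all (cycle, position) pairs: the cycles
  rotate j (a # q), j < length (a # q), where a is the deleted arrow.\<close>
definition cyc_deriv :: "'a set \<Rightarrow> ('a \<Rightarrow> 'v) \<Rightarrow> ('a \<Rightarrow> 'v) \<Rightarrow> ('a \<Rightarrow> 'k::field) \<Rightarrow> (('v, 'a) qpath \<Rightarrow> 'k) \<Rightarrow> ('v, 'a) qpath \<Rightarrow> 'k" where
  "cyc_deriv Q1 src tgt \<xi> S q =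
     (if is_path Q1 src tgt q then
        (\<Sum>a\<in>{a\<in>Q1. src a = path_tgt tgt q \<and> tgt a = fst q}.
           \<xi> a * (\<Sum>j<Suc (length (snd q)).
              S (let l = rotate j (a # snd q) in (src (last l), l))))
      else 0)"

definition jacobian_ideal :: "'a set \<Rightarrow> ('a \<Rightarrow> 'v) \<Rightarrow> ('a \<Rightarrow> 'v) \<Rightarrow> (('v, 'a) qpath \<Rightarrow> 'k::field) \<Rightarrow> (('v, 'a) qpath \<Rightarrow> 'k) set" where
  "jacobian_ideal Q1 src tgt S = mclosure (ideal_gen Q1 src tgt {cyc_deriv Q1 src tgt \<xi> S | \<xi>. True})"

definition is_QP :: "'a set \<Rightarrow> ('a \<Rightarrow> 'v) \<Rightarrow> ('a \<Rightarrow> 'v) \<Rightarrow> (('v, 'a) qpath \<Rightarrow> 'k::field) \<Rightarrow> bool" where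
  "is_QP Q1 src tgt S \<longleftrightarrow> (\<forall>a\<in>Q1. src a \<noteq> tgt a) \<and> potential Q1 src tgt S \<and>
     (\<forall>c c'. S c \<noteq> 0 \<longrightarrow> S c' \<noteq> 0 \<longrightarrow> (\<exists>k. snd c' = rotate k (snd c)) \<longrightarrow> c = c')"

definition reduced :: "(('v, 'a) qpath \<Rightarrow> 'k::field) \<Rightarrow> bool" where
  "reduced S \<longleftrightarrow> (\<forall>p. length (snd p) < 3 \<longrightarrow> S p = 0)"

definition rigid :: "'a set \<Rightarrow> ('a \<Rightarrow> 'v) \<Rightarrow> ('a \<Rightarrow> 'v) \<Rightarrow> (('v, 'a) qpath \<Rightarrow> 'k::field) \<Rightarrow> bool" where
  "rigid Q1 src tgt S \<longleftrightarrow>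
     (\<forall>P. potential Q1 src tgt (P :: ('v, 'a) qpath \<Rightarrow> 'k) \<longrightarrow>
        (\<exists>J\<in>jacobian_ideal Q1 src tgt S. cyc_equiv Q1 src tgt P J))"

end

theory Submission
  imports Defs
begin

text \<open>
  Suppose arrows \<open>a : j \<rightarrow> i\<close> and \<open>b : i \<rightarrow> j\<close> exist and take the potential \<open>ab\<close>.
  Since \<open>S\<close> is reduced, every cyclic derivative lies in \<open>m\<^sup>2\<close>, and since there are
  no loops it has no cyclic component of degree 2; hence every element of \<open>J(S)\<close> has
  coefficient 0 at both \<open>ab\<close> and \<open>ba\<close>. On the other hand the sum of the coefficients
  at \<open>ab\<close> and \<open>ba\<close> is invariant under cyclic equivalence. For \<open>ab\<close> this sum is 1,
  so \<open>ab\<close> is not cyclically equivalent to an element of \<open>J(S)\<close>, contradicting rigidity.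
\<close>

lemma cyc_deriv_eq_0_if_short:
  assumes "reduced S" and "length (snd q) < 2"
  shows "cyc_deriv Q1 src tgt \<xi> S q = 0"
proof -
  have "S (let l = rotate j (a # snd q) in (src (last l), l)) = 0" for a j
    using assms unfolding reduced_def Let_def by simp
  then show ?thesis unfolding cyc_deriv_def by simp
qed

lemma cyc_deriv_eq_0_if_closed:
  assumes "\<forall>a\<in>Q1. src a \<noteq> tgt a" and "path_tgt tgt q = fst q"
  shows "cyc_deriv Q1 src tgt \<xi> S q = 0"
proof -
  have no_arrows: "{a\<in>Q1. src a = path_tgt tgt q \<and> tgt a = fst q} = {}" using assms by auto
  show ?thesis unfolding cyc_deriv_def no_arrows by simp
qed

lemma pmult_eq_0_if_suffixes_vanish:
  assumes "\<And>k. k \<le> length (snd p) \<Longrightarrow> g (fst p, drop k (snd p)) = 0"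
  shows "pmult tgt f g p = 0"
  unfolding pmult_def using assms by (intro sum.neutral) auto

text \<open>Only the factorisation with trivial outer factors evaluates the middle factor at \<open>p\<close>
  itself; all other factorisations evaluate it at strictly shorter paths.\<close>

lemma pmult_pmult_eq_0:
  assumes "g p = 0" and "\<And>q. length (snd q) < length (snd p) \<Longrightarrow> g q = 0"
  shows "pmult tgt (pmult tgt u g) w p = 0"
  unfolding pmult_def[of tgt "pmult tgt u g"]
proof (intro sum.neutral ballI)
  fix k assume "k \<in> {0..length (snd p)}"
  then have k: "k \<le> length (snd p)" by simp
  let ?p = "(path_tgt tgt (fst p, drop k (snd p)), take k (snd p))"
  have "pmult tgt u g ?p = 0"
  proof (rule pmult_eq_0_if_suffixes_vanish)
    fix k' assume k': "k' \<le> length (snd ?p)"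
    show "g (fst ?p, drop k' (snd ?p)) = 0"
    proof (cases "k = length (snd p) \<and> k' = 0")
      case True
      then have "(fst ?p, drop k' (snd ?p)) = p" by (simp add: path_tgt_def)
      then show ?thesis using assms(1) by simp
    next
      case False
      then show ?thesis using k k' by (intro assms(2)) auto
    qed
  qed
  then show "pmult tgt u g ?p * w (fst p, drop k (snd p)) = 0" by simp
qed

lemma ideal_gen_eq_0:
  assumes "x \<in> ideal_gen Q1 src tgt G"
    and "\<And>g. g \<in> G \<Longrightarrow> g p = 0"
    and "\<And>g q. g \<in> G \<Longrightarrow> length (snd q) < length (snd p) \<Longrightarrow> g q = 0"
  shows "x p = 0"
  using assms(1) by induction (simp_all add: assms(2,3) pmult_pmult_eq_0)

lemma jacobian_ideal_eq_0_at_short_cycle: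
  assumes "\<forall>a\<in>Q1. src a \<noteq> tgt a" and "reduced S"
    and "J \<in> jacobian_ideal Q1 src tgt S"
    and "path_tgt tgt p = fst p" and "length (snd p) \<le> 2"
  shows "J p = 0"
proof -
  obtain u where u: "u \<in> ideal_gen Q1 src tgt {cyc_deriv Q1 src tgt \<xi> S | \<xi>. True}"
    and "\<forall>q. length (snd q) < 3 \<longrightarrow> J q = u q"
    using assms(3) unfolding jacobian_ideal_def mclosure_def by blast
  then have "J p = u p" using assms(5) by (cases p) simp
  also have "u p = 0"
  proof (rule ideal_gen_eq_0[OF u])
    show "g p = 0" if "g \<in> {cyc_deriv Q1 src tgt \<xi> S | \<xi>. True}" for g
      using that cyc_deriv_eq_0_if_closed[OF assms(1,4)] by blast
    show "g q = 0" if "g \<in> {cyc_deriv Q1 src tgt \<xi> S | \<xi>. True}"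
      and "length (snd q) < length (snd p)" for g q
    proof -
      have "length (snd q) < 2" using that(2) assms(5) by simp
      then show ?thesis using that(1) cyc_deriv_eq_0_if_short[OF assms(2)] by blast
    qed
  qed
  finally show ?thesis .
qed

lemma rot_eq_2path_iff:
  assumes "is_path Q1 src tgt d"
  shows "rot src d = (w, [a, b]) \<longleftrightarrow> w = src b \<and> d = (src a, [b, a])"
proof
  assume rot: "rot src d = (w, [a, b])"
  obtain v z zs where d: "d = (v, z # zs)"
    using rot by (cases d; cases "snd d") auto
  with rot have "zs = [a]" "z = b" "w = src b"
    by (auto simp: append_eq_Cons_conv)
  moreover have "src (last (z # zs)) = v" using assms d by (simp add: is_path_def)
  ultimately show "w = src b \<and> d = (src a, [b, a])" using d by simp
qed auto

lemma cyc_equiv_2cycle_sum: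
  fixes P P' :: "('v, 'a) qpath \<Rightarrow> 'k::field" and src :: "'a \<Rightarrow> 'v"
  assumes "cyc_equiv Q1 src tgt P P'" and "src a \<noteq> src b"
  shows "(P (src b, [a, b]) - P' (src b, [a, b])) + (P (src a, [b, a]) - P' (src a, [b, a])) = 0"
proof -
  define c where "c = (src b, [a, b])"
  define c' where "c' = (src a, [b, a])"
  have "c \<noteq> c'" using assms(2) by (simp add: c_def c'_def)
  let ?X = "{(\<lambda>q. pathvec d q - pathvec (rot src d) q) | d. is_cyclic_path Q1 src tgt d}"
  have relator: "x c + x c' = 0" if x_rel: "x \<in> ?X" for x :: "('v, 'a) qpath \<Rightarrow> 'k"
  proof -
    obtain d where x: "x = (\<lambda>q. pathvec d q - pathvec (rot src d) q)"
      and "is_path Q1 src tgt d"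
      using x_rel unfolding is_cyclic_path_def by blast
    then have "rot src d = c \<longleftrightarrow> d = c'" "rot src d = c' \<longleftrightarrow> d = c"
      by (simp_all add: rot_eq_2path_iff c_def c'_def)
    then show ?thesis using \<open>c \<noteq> c'\<close> unfolding x pathvec_def by auto
  qed
  have span: "x c + x c' = 0" if "x \<in> kspan ?X" for x :: "('v, 'a) qpath \<Rightarrow> 'k"
    using that
  proof induction
    case (smult y e)
    then have "e * (y c + y c') = 0" using relator by simp
    then show ?case by (simp add: distrib_left)
  qed (simp_all add: algebra_simps)
  obtain z where "z \<in> kspan ?X" and "\<forall>p. length (snd p) < 3 \<longrightarrow> P p - P' p = z p"
    using assms(1) unfolding cyc_equiv_def mclosure_def by blast
  then show ?thesis using span unfolding c_def c'_def by simp
qed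

theorem proposition8p1:
  fixes Q1 :: "'a set" and src tgt :: "'a \<Rightarrow> 'v::finite"
    and S :: "('v, 'a) qpath \<Rightarrow> 'k::field"
  assumes "finite Q1"
    and "is_QP Q1 src tgt S"
    and "reduced S"
    and "rigid Q1 src tgt S"
  shows "\<forall>i j. i \<noteq> j \<longrightarrow>
           (\<not> (\<exists>a\<in>Q1. src a = j \<and> tgt a = i)) \<or> (\<not> (\<exists>b\<in>Q1. src b = i \<and> tgt b = j))"
proof (intro allI impI, rule ccontr)
  fix i j assume "i \<noteq> j"
    and "\<not> ((\<not> (\<exists>a\<in>Q1. src a = j \<and> tgt a = i)) \<or> (\<not> (\<exists>b\<in>Q1. src b = i \<and> tgt b = j)))"
  then obtain a b where a: "a \<in> Q1" "src a = j" "tgt a = i" and b: "b \<in> Q1" "src b = i" "tgt b = j"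
    by blast
  have no_loops: "\<forall>a\<in>Q1. src a \<noteq> tgt a" using assms(2) unfolding is_QP_def by blast
  let ?c = "(i, [a, b])" and ?c' = "(j, [b, a])"
  have "is_cyclic_path Q1 src tgt ?c"
    using a b unfolding is_cyclic_path_def is_path_def composable_def path_tgt_def
    by (auto simp: less_Suc_eq)
  then have "potential Q1 src tgt (pathvec ?c :: ('v, 'a) qpath \<Rightarrow> 'k)"
    unfolding potential_def pathvec_def by auto
  then obtain J where J: "J \<in> jacobian_ideal Q1 src tgt S"
    and equiv: "cyc_equiv Q1 src tgt (pathvec ?c) J"
    using assms(4) unfolding rigid_def by blast
  have "J ?c = 0" "J ?c' = 0"
    using a b jacobian_ideal_eq_0_at_short_cycle[OF no_loops assms(3) J]
    by (simp_all add: path_tgt_def)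
  moreover have "(pathvec ?c ?c - J ?c) + (pathvec ?c ?c' - J ?c') = (0 :: 'k)"
    using cyc_equiv_2cycle_sum[OF equiv, of a b] a b \<open>i \<noteq> j\<close> by simp
  ultimately show False using \<open>i \<noteq> j\<close> by (simp add: pathvec_def)
qed

end
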